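(* Let $\underline\delta\ge1$ be an integer and $\pi$ the switching policy $(0,\underline\delta)$ (transmit in $(0,0,0)$, in every state $(1,0,\delta)$, $\delta\ge1$, and in $(0,1,\delta)$ for $\delta\ge\underline\delta$). Define $a_1=\frac{pp_f}{1-\bar qp_f}$, $A=\frac{p}{\bar q(1-\bar qp_f)}$, $B=\frac{q\bar p^{\underline\delta-1}}{1-\bar pp_f}$, $b_1=\frac{q(1-\bar p^{\underline\delta-1})}{1-\bar p}+B$, $D=(1+a_1)\bar pB+(1+b_1)\bar qA$. Then the stationary distribution of $\{S_t\}$ under $\pi$ is $\nu_{0,0,0}=\bar pB/D$, $\nu_{1,1,0}=\bar qA/D$, $\nu_{1,0,k}=pp_f(\bar qp_f)^{k-1}\nu_{0,0,0}$ for $k\ge1$, $\nu_{0,1,k}=q\bar p^{k-1}\nu_{1,1,0}$ for $1\le k\le\underline\delta$ and $\nu_{0,1,k}=q\bar p^{\underline\delta-1}(\bar pp_f)^{k-\underline\delta}\nu_{1,1,0}$ for $k>\underline\delta$. Moreover, $$\mathcal L(\pi)=\frac{\beta pp_f\nu_{0,0,0}}{(1-\bar qp_f)^2}+(1-\beta)q\,\psi(\bar p,\underline\delta)\,\nu_{1,1,0}+\lambda\big((1+a_1)\nu_{0,0,0}+B\nu_{1,1,0}\big),$$ where $\psi(x,y)=\frac{1-(x+(1-x)y)x^{y-1}}{(1-x)^2}+\frac{(xp_f+(1-xp_f)y)x^{y-1}}{(1-xp_f)^2}$.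
   Context: Fix $p,q\in(0,1)$, $\bar p=1-p$, $\bar q=1-q$. The source $\{X_t\}$ is a Markov chain on $\{0,1\}$ with $\Pr[X_{t+1}=1\mid X_t=0]=p$, $\Pr[X_{t+1}=0\mid X_t=1]=q$; channel i.i.d. Bernoulli with success probability $p_s\in(0,1]$, independent of the source, $p_f=1-p_s$. Estimate dynamics: if $A_t=1$ and the transmission succeeds then $\hat X_{t+1}=X_{t+1}$, otherwise $\hat X_{t+1}=\hat X_t$. Age: $\Delta_{t+1}=\Delta_t+1$ if $X_{t+1}\ne\hat X_{t+1}$, else $0$. State $S_t=(X_t,\hat X_t,\Delta_t)\in\mathcal S=\{(0,0,0),(1,1,0)\}\cup\{(1,0,\delta),(0,1,\delta):\delta\ge1\}$, $S_1=(0,0,0)$; $\nu_{i,j,\delta}$ is the stationary probability of $(i,j,\delta)$. Per-state cost $c(s)=\beta\delta$ for $s=(1,0,\delta)$, $(1-\beta)\delta$ for $s=(0,1,\delta)$, $0$ for synced states, $\beta\in[0,1]$; per-stage cost $\ell(s,a)=\mathbb E[c(S_{t+1})\mid S_t=s,A_t=a]+\lambda\mathbb 1\{a=1\}$, $\lambda\ge0$; average cost $\mathcal L(\pi)=\limsup_{T\to\infty}\frac1T\sum_{t=1}^T\mathbb E^\pi[\ell(S_t,A_t)\mid S_1=(0,0,0)]$. The switching policy $(\bar\delta,\underline\delta)$ ($\bar\delta,\underline\delta\ge0$ integers) transmits iff $S_t=(1,0,\delta)$ with $\delta\ge\bar\delta$, or $S_t=(0,1,\delta)$ with $\delta\ge\underline\delta$,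 or ($\bar\delta=0$ and $S_t=(0,0,0)$), or ($\underline\delta=0$ and $S_t=(1,1,0)$). *)

theory Defs
  imports "HOL-Analysis.Analysis"
begin

text \<open>States are triples (X, Xhat, Delta) of naturals; the valid state space is SS.\<close>
type_synonym state = "nat \<times> nat \<times> nat"

definition SS :: "state set" where
  "SS = {(0,0,0), (1,1,0)} \<union> {(1,0,d) | d. d \<ge> 1} \<union> {(0,1,d) | d. d \<ge> 1}"

definition src :: "real \<Rightarrow> real \<Rightarrow> nat \<Rightarrow> nat \<Rightarrow> real" where
  "src p q x y = (if x = 0 then (if y = 1 then p else 1 - p) else (if y = 0 then q else 1 - q))"

definition age_upd :: "nat \<Rightarrow> nat \<Rightarrow> nat \<Rightarrow> nat" where
  "age_upd y xh d = (if y \<noteq> xh then d + 1 else 0)"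

text \<open>Controlled transition kernel Pr[S_{t+1} = s' | S_t = s, A_t = a];
  a = True means transmit; ps is the channel success probability.\<close>
definition trans :: "real \<Rightarrow> real \<Rightarrow> real \<Rightarrow> state \<Rightarrow> bool \<Rightarrow> state \<Rightarrow> real" where
  "trans p q ps s a s' = (case s of (x, xh, d) \<Rightarrow>
     (\<Sum>y\<in>{0::nat,1}. src p q x y *
        (if a then ps * (if s' = (y, y, 0) then 1 else 0)
                   + (1 - ps) * (if s' = (y, xh, age_upd y xh d) then 1 else 0)
         else (if s' = (y, xh, age_upd y xh d) then 1 else 0))))"

definition switching :: "nat \<Rightarrow> nat \<Rightarrow> state \<Rightarrow> bool" where
  "switching db du s = (case s of (x, xh, d) \<Rightarrow>
     (x = 1 \<and> xh = 0 \<and> d \<ge> db) \<or> (x = 0 \<and> xh = 1 \<and> d \<ge> du)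
     \<or> (db = 0 \<and> s = (0,0,0)) \<or> (du = 0 \<and> s = (1,1,0)))"

definition cst :: "real \<Rightarrow> state \<Rightarrow> real" where
  "cst \<beta> s = (case s of (x, xh, d) \<Rightarrow>
     (if x = 1 \<and> xh = 0 then \<beta> * real d
      else if x = 0 \<and> xh = 1 then (1 - \<beta>) * real d else 0))"

definition stage_cost :: "real \<Rightarrow> real \<Rightarrow> real \<Rightarrow> real \<Rightarrow> real \<Rightarrow> state \<Rightarrow> bool \<Rightarrow> real" where
  "stage_cost p q ps \<beta> lam s a =
     (\<Sum>\<^sub>\<infinity>s'\<in>SS. trans p q ps s a s' * cst \<beta> s') + lam * (if a then 1 else 0)"

text \<open>Distribution of S_{n+1} under stationary deterministic policy pol, with S_1 = (0,0,0).\<close>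
fun state_dist :: "real \<Rightarrow> real \<Rightarrow> real \<Rightarrow> (state \<Rightarrow> bool) \<Rightarrow> nat \<Rightarrow> state \<Rightarrow> real" where
  "state_dist p q ps pol 0 s = (if s = (0,0,0) then 1 else 0)"
| "state_dist p q ps pol (Suc n) s' =
     (\<Sum>\<^sub>\<infinity>s\<in>SS. state_dist p q ps pol n s * trans p q ps s (pol s) s')"

definition avg_cost :: "real \<Rightarrow> real \<Rightarrow> real \<Rightarrow> real \<Rightarrow> real \<Rightarrow> (state \<Rightarrow> bool) \<Rightarrow> ereal" where
  "avg_cost p q ps \<beta> lam pol = limsup (\<lambda>T::nat. ereal ((1 / real T) *
      (\<Sum>t=1..T. \<Sum>\<^sub>\<infinity>s\<in>SS. state_dist p q ps pol (t - 1) s * stage_cost p q ps \<beta> lam s (pol s))))"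

definition stationary :: "real \<Rightarrow> real \<Rightarrow> real \<Rightarrow> (state \<Rightarrow> bool) \<Rightarrow> (state \<Rightarrow> real) \<Rightarrow> bool" where
  "stationary p q ps pol \<nu> \<longleftrightarrow>
     (\<forall>s\<in>SS. \<nu> s \<ge> 0) \<and> (\<nu> has_sum 1) SS \<and>
     (\<forall>s'\<in>SS. ((\<lambda>s. \<nu> s * trans p q ps s (pol s) s') has_sum \<nu> s') SS)"

definition psi :: "real \<Rightarrow> real \<Rightarrow> nat \<Rightarrow> real" where
  "psi pf x y = (1 - (x + (1 - x) * real y) * x ^ (y - 1)) / (1 - x)^2
     + ((x * pf + (1 - x * pf) * real y) * x ^ (y - 1)) / (1 - x * pf)^2"

end

theory Submission
  imports Defs
begin

text \<open>
  Every state of positive age has exactly one predecessor under the policy, so the balance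
  equations there force a stationary distribution to be the displayed geometric profile,
  determined by its values at (0,0,0) and (1,1,0); normalisation and the balance equation at
  (0,0,0) then fix these two values.

  For the average cost we solve the Poisson equation
  \<open>\<ell>(s) = g + h(s) - E[h(S\<^sub>t\<^sub>+\<^sub>1) | S\<^sub>t = s]\<close> with \<open>g\<close> the claimed value.
  Telescoping gives \<open>(1/T) \<Sum>\<^sub>t E \<ell>(S\<^sub>t) = g + (E h(S\<^sub>1) - E h(S\<^sub>T\<^sub>+\<^sub>1)) / T\<close>, and the
  remainder vanishes because \<open>h\<close> grows at most linearly in the age, whose expectation stays
  bounded: it contracts by the factor \<open>max (1 - p) (1 - q)\<close> in every step.
\<close>

section \<open>Infinite sums\<close>

lemma has_sum_single_point:
  assumes "x \<in> A" "\<And>y. y \<in> A \<Longrightarrow> y \<noteq> x \<Longrightarrow> f y = 0"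
  shows "(f has_sum f x) A"
  by (rule has_sum_finite_neutralI[where B="{x}"]) (use assms in auto)

lemma has_sum_geometric:
  fixes r :: real
  assumes "0 \<le> r" "r < 1"
  shows "((\<lambda>n. c * r ^ n) has_sum (c / (1 - r))) UNIV"
proof -
  have "(\<lambda>n. c * r ^ n) sums (c * (1 / (1 - r)))"
    using geometric_sums[of r] assms by (intro sums_mult) simp
  moreover have "summable (\<lambda>n. norm (c * r ^ n))"
    using assms by (simp add: abs_mult power_abs summable_mult summable_geometric)
  ultimately show ?thesis
    using norm_summable_imp_has_sum by fastforce
qed

lemma has_sum_from_tail:
  fixes \<phi> :: "nat \<Rightarrow> real"
  assumes "((\<lambda>j. \<phi> (m + j)) has_sum S) UNIV"
  shows "(\<phi> has_sum ((\<Sum>k<m. \<phi> k) + S)) UNIV"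
proof -
  have "(\<phi> has_sum S) (range (\<lambda>j. m + j))"
    using assms has_sum_reindex[of "\<lambda>j. m + j" UNIV \<phi>] by (simp add: inj_def o_def)
  then have "(\<phi> has_sum ((\<Sum>k<m. \<phi> k) + S)) ({..<m} \<union> range (\<lambda>j. m + j))"
    by (intro has_sum_Un_disjoint) auto
  moreover have "{..<m} \<union> range (\<lambda>j. m + j) = UNIV"
    by (auto simp: image_iff) (metis le_add_diff_inverse not_less)
  ultimately show ?thesis by simp
qed

section \<open>The controlled chain under the switching policy\<close>

lemma SS_cases:
  assumes "s \<in> SS"
  obtains "s = (0,0,0)" | "s = (1,1,0)" | d where "d \<ge> 1" "s = (1,0,d)" | d where "d \<ge> 1" "s = (0,1,d)"
  using assms unfolding SS_def by blast

lemma has_sum_SS: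
  fixes f :: "state \<Rightarrow> real"
  assumes "((\<lambda>d. f (1,0,Suc d)) has_sum S10) UNIV" "((\<lambda>d. f (0,1,Suc d)) has_sum S01) UNIV"
  shows "(f has_sum (f (0,0,0) + (f (1,1,0) + (S10 + S01)))) SS"
proof -
  define h10 where "h10 d = (1::nat, 0::nat, Suc d)" for d
  define h01 where "h01 d = (0::nat, 1::nat, Suc d)" for d
  have "(f has_sum S10) (range h10)" "(f has_sum S01) (range h01)"
    using assms has_sum_reindex[of h10 UNIV f] has_sum_reindex[of h01 UNIV f]
    by (simp_all add: inj_def o_def h10_def h01_def)
  then have "(f has_sum (S10 + S01)) (range h10 \<union> range h01)"
    by (rule has_sum_Un_disjoint) (auto simp: h10_def h01_def)
  then have "(f has_sum (f (0,0,0) + (f (1,1,0) + (S10 + S01))))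
      (insert (0,0,0) (insert (1,1,0) (range h10 \<union> range h01)))"
    by (intro has_sum_insert) (auto simp: h10_def h01_def)
  moreover have "insert (0,0,0) (insert (1,1,0) (range h10 \<union> range h01)) = SS"
  proof -
    have "(1,0,d) \<in> range h10" "(0,1,d) \<in> range h01" if "d \<ge> 1" for d
      using that by (auto simp: h10_def h01_def image_iff intro!: exI[of _ "d - 1"])
    then show ?thesis unfolding SS_def by (auto simp: h10_def h01_def)
  qed
  ultimately show ?thesis by simp
qed

definition next_expect :: "real \<Rightarrow> real \<Rightarrow> real \<Rightarrow> bool \<Rightarrow> state \<Rightarrow> (state \<Rightarrow> real) \<Rightarrow> real" where
  "next_expect p q ps a s f = (case s of (x, xh, d) \<Rightarrow>
     src p q x 0 * (if a then ps * f (0,0,0) + (1 - ps) * f (0, xh, age_upd 0 xh d)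
                    else f (0, xh, age_upd 0 xh d))
   + src p q x 1 * (if a then ps * f (1,1,0) + (1 - ps) * f (1, xh, age_upd 1 xh d)
                    else f (1, xh, age_upd 1 xh d)))"

lemma trans_has_sum_next_expect:
  assumes "s \<in> SS"
  shows "((\<lambda>s'. trans p q ps s a s' * f s') has_sum next_expect p q ps a s f) SS"
proof -
  obtain x xh d where s: "s = (x, xh, d)" by (cases s) auto
  define I where "I t s' = (if s' = (t::state) then (1::real) else 0)" for t s'
  define t0 where "t0 = (0::nat, xh, age_upd 0 xh d)"
  define t1 where "t1 = (1::nat, xh, age_upd 1 xh d)"
  have "t0 \<in> SS" "t1 \<in> SS" "(0,0,0) \<in> SS" "(1,1,0) \<in> SS"
    using assms by (auto simp: s t0_def t1_def SS_def age_upd_def)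
  moreover have point: "((\<lambda>s'. I t s' * f s') has_sum f t) SS" if "t \<in> SS" for t
    using has_sum_single_point[of t SS "\<lambda>s'. I t s' * f s'"] that by (simp add: I_def)
  ultimately show ?thesis
  proof (cases a)
    case True
    have "trans p q ps s a s' * f s'
        = src p q x 0 * (ps * (I (0,0,0) s' * f s') + (1 - ps) * (I t0 s' * f s'))
        + src p q x 1 * (ps * (I (1,1,0) s' * f s') + (1 - ps) * (I t1 s' * f s'))" for s'
      unfolding trans_def s I_def t0_def t1_def using True by (simp add: algebra_simps)
    moreover have "next_expect p q ps a s f
        = src p q x 0 * (ps * f (0,0,0) + (1 - ps) * f t0) + src p q x 1 * (ps * f (1,1,0) + (1 - ps) * f t1)"
      unfolding next_expect_def s t0_def t1_def using True by simp
    ultimately show ?thesis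
      using \<open>t0 \<in> SS\<close> \<open>t1 \<in> SS\<close> \<open>(0,0,0) \<in> SS\<close> \<open>(1,1,0) \<in> SS\<close>
      by (simp only:) (intro has_sum_add has_sum_cmult_right point)
  next
    case False
    have "trans p q ps s a s' * f s' = src p q x 0 * (I t0 s' * f s') + src p q x 1 * (I t1 s' * f s')" for s'
      unfolding trans_def s I_def t0_def t1_def using False by (simp add: algebra_simps)
    moreover have "next_expect p q ps a s f = src p q x 0 * f t0 + src p q x 1 * f t1"
      unfolding next_expect_def s t0_def t1_def using False by simp
    ultimately show ?thesis
      using \<open>t0 \<in> SS\<close> \<open>t1 \<in> SS\<close> by (simp only:) (intro has_sum_add has_sum_cmult_right point)
  qed
qed

locale switching_chain =
  fixes p q ps :: real and du :: nat
  assumes p0: "0 < p" and p1: "p < 1" and q0: "0 < q" and q1: "q < 1"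
    and ps0: "0 < ps" and ps1: "ps \<le> 1" and du1: "1 \<le> du"
begin

abbreviation "pol \<equiv> switching 0 du"
abbreviation "mu \<equiv> state_dist p q ps pol"
abbreviation "pf \<equiv> 1 - ps"
abbreviation "r10 \<equiv> (1 - q) * pf"
abbreviation "r01 \<equiv> (1 - p) * pf"

definition age :: "state \<Rightarrow> nat" where "age s = snd (snd s)"

definition SS_upto :: "nat \<Rightarrow> state set" where "SS_upto n = {s\<in>SS. age s \<le> n}"

text \<open>\<open>mu n\<close> is the law of \<open>S\<^sub>n\<^sub>+\<^sub>1\<close>, which lives on states of age at most \<open>n\<close>; so its
  expectations are finite sums.\<close>
definition expect :: "nat \<Rightarrow> (state \<Rightarrow> real) \<Rightarrow> real" where
  "expect n f = (\<Sum>s\<in>SS_upto n. mu n s * f s)"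

lemma finite_SS_upto: "finite (SS_upto n)"
  by (rule finite_subset[of _ "{0,1} \<times> {0,1} \<times> {..n}"]) (auto simp: SS_upto_def SS_def age_def)

lemma trans_nonneg: "trans p q ps s a s' \<ge> 0"
proof -
  have "src p q x y \<ge> 0" for x y
    using p0 p1 q0 q1 by (auto simp: src_def)
  then show ?thesis
    using ps0 ps1 by (cases s) (auto simp: trans_def intro!: add_nonneg_nonneg mult_nonneg_nonneg)
qed

lemma trans_age_jump:
  assumes "s \<in> SS" "age s' > age s + 1"
  shows "trans p q ps s a s' = 0"
  using assms by (cases s; cases s') (auto simp: trans_def age_def age_upd_def)

lemma state_dist_age_gt: "s \<in> SS \<Longrightarrow> age s > n \<Longrightarrow> mu n s = 0"
proof (induction n arbitrary: s)
  case 0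
  then show ?case by (auto simp: age_def)
next
  case (Suc n)
  have "mu n s0 * trans p q ps s0 (pol s0) s = 0" if "s0 \<in> SS" for s0
  proof (cases "age s0 \<le> n")
    case True
    then show ?thesis using trans_age_jump[OF that, of s] Suc.prems by auto
  next
    case False
    then show ?thesis using Suc.IH[OF that] by auto
  qed
  then show ?case by (simp add: infsum_0)
qed

lemma infsum_state_dist: "(\<Sum>\<^sub>\<infinity>s\<in>SS. mu n s * f s) = (\<Sum>s\<in>SS_upto n. mu n s * f s)"
proof -
  have "(\<Sum>\<^sub>\<infinity>s\<in>SS. mu n s * f s) = (\<Sum>\<^sub>\<infinity>s\<in>SS_upto n. mu n s * f s)"
    by (rule infsum_cong_neutral) (auto simp: SS_upto_def state_dist_age_gt)
  then show ?thesis using finite_SS_upto by simp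
qed

lemma state_dist_Suc: "mu (Suc n) s' = (\<Sum>s\<in>SS_upto n. mu n s * trans p q ps s (pol s) s')"
  using infsum_state_dist[of n "\<lambda>s. trans p q ps s (pol s) s'"] by simp

lemma state_dist_nonneg: "mu n s \<ge> 0"
  by (induction n arbitrary: s) (auto simp only: state_dist_Suc intro!: sum_nonneg mult_nonneg_nonneg trans_nonneg, simp)

lemma next_expect_eq_sum:
  assumes "s \<in> SS_upto n"
  shows "(\<Sum>s'\<in>SS_upto (Suc n). trans p q ps s a s' * f s') = next_expect p q ps a s f"
proof -
  have "s \<in> SS" using assms by (simp add: SS_upto_def)
  have "((\<lambda>s'. trans p q ps s a s' * f s') has_sum (\<Sum>s'\<in>SS_upto (Suc n). trans p q ps s a s' * f s')) SS"
  proof (rule has_sum_finite_neutralI[OF finite_SS_upto])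
    fix s' assume "s' \<in> SS - SS_upto (Suc n)"
    then have "age s' > age s + 1" using assms by (auto simp: SS_upto_def)
    then show "trans p q ps s a s' * f s' = 0" using trans_age_jump[OF \<open>s \<in> SS\<close>] by simp
  qed (auto simp: SS_upto_def)
  then show ?thesis using trans_has_sum_next_expect[OF \<open>s \<in> SS\<close>] has_sum_unique by blast
qed

lemma expect_Suc: "expect (Suc n) f = expect n (\<lambda>s. next_expect p q ps (pol s) s f)"
proof -
  have "expect (Suc n) f = (\<Sum>s'\<in>SS_upto (Suc n). \<Sum>s\<in>SS_upto n. mu n s * trans p q ps s (pol s) s' * f s')"
    unfolding expect_def state_dist_Suc by (simp add: sum_distrib_right)
  also have "\<dots> = (\<Sum>s\<in>SS_upto n. mu n s * (\<Sum>s'\<in>SS_upto (Suc n). trans p q ps s (pol s) s' * f s'))"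
    by (subst sum.swap) (simp add: sum_distrib_left mult.assoc)
  also have "\<dots> = expect n (\<lambda>s. next_expect p q ps (pol s) s f)"
    unfolding expect_def by (rule sum.cong) (auto simp: next_expect_eq_sum)
  finally show ?thesis .
qed

lemma expect_add: "expect n (\<lambda>s. f s + g s) = expect n f + expect n g"
  by (simp add: expect_def distrib_left sum.distrib)

lemma expect_cmult: "expect n (\<lambda>s. c * f s) = c * expect n f"
  by (simp add: expect_def sum_distrib_left mult.left_commute)

lemma expect_diff: "expect n (\<lambda>s. f s - g s) = expect n f - expect n g"
  by (simp add: expect_def right_diff_distrib sum_subtractf)

lemma expect_mono: "(\<And>s. s \<in> SS \<Longrightarrow> f s \<le> g s) \<Longrightarrow> expect n f \<le> expect n g"
  unfolding expect_def SS_upto_def by (auto intro!: sum_mono mult_left_mono state_dist_nonneg)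

lemma expect_cong: "(\<And>s. s \<in> SS \<Longrightarrow> f s = g s) \<Longrightarrow> expect n f = expect n g"
  unfolding expect_def SS_upto_def by (auto intro!: sum.cong)

lemma abs_expect_le: "\<bar>expect n f\<bar> \<le> expect n (\<lambda>s. \<bar>f s\<bar>)"
  unfolding expect_def by (rule order_trans[OF sum_abs]) (simp add: abs_mult state_dist_nonneg)

lemma expect_0: "expect 0 f = f (0,0,0)"
proof -
  have "SS_upto 0 = {(0,0,0),(1,1,0)}" by (auto simp: SS_upto_def SS_def age_def)
  then show ?thesis by (simp add: expect_def)
qed

lemma expect_const: "expect n (\<lambda>_. c) = c"
proof (induction n)
  case (Suc n)
  have "next_expect p q ps a s (\<lambda>_. c) = c" if "s \<in> SS" for a s
    using that by (auto simp: SS_def next_expect_def src_def algebra_simps)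
  with Suc show ?case by (simp add: expect_Suc expect_cong[of "\<lambda>s. next_expect p q ps (pol s) s (\<lambda>_. c)"])
qed (simp add: expect_0)

definition rho :: real where "rho = max (1 - p) (1 - q)"

lemma rho_bounds: "0 \<le> rho" "rho < 1"
  using p0 p1 q0 q1 by (auto simp: rho_def)

lemma next_expect_age_le: "s \<in> SS \<Longrightarrow> next_expect p q ps (pol s) s (\<lambda>s. real (age s)) \<le> rho * real (age s) + 1"
proof (erule SS_cases)
  fix d assume d: "s = (1,0,d)"
  have "(1 - q) * (pf * (real d + 1)) \<le> (1 - q) * (real d + 1)"
    using q1 ps0 ps1 by (intro mult_left_mono) auto
  also have "\<dots> \<le> rho * real d + 1"
    using q0 mult_right_mono[of "1 - q" rho "real d"] by (simp add: rho_def algebra_simps)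
  finally show ?thesis
    using d by (simp add: next_expect_def src_def age_def age_upd_def switching_def add.commute)
next
  fix d assume d: "1 \<le> d" "s = (0,1,d)"
  have "(1 - p) * (pf * (real d + 1)) \<le> (1 - p) * (real d + 1)"
    using p1 ps0 ps1 by (intro mult_left_mono) auto
  moreover have "(1 - p) * (real d + 1) \<le> rho * real d + 1"
    using p0 mult_right_mono[of "1 - p" rho "real d"] by (simp add: rho_def algebra_simps)
  ultimately show ?thesis
    using d by (simp add: next_expect_def src_def age_def age_upd_def switching_def add.commute)
qed (use p0 p1 q0 q1 ps0 ps1 rho_bounds du1 in
      \<open>simp_all add: next_expect_def src_def age_def age_upd_def switching_def mult_le_one\<close>)

lemma expect_age_bound: "expect n (\<lambda>s. real (age s)) \<le> 1 / (1 - rho)"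
proof (induction n)
  case 0
  then show ?case using rho_bounds by (simp add: expect_0 age_def)
next
  case (Suc n)
  have "expect (Suc n) (\<lambda>s. real (age s)) \<le> expect n (\<lambda>s. rho * real (age s) + 1)"
    unfolding expect_Suc by (rule expect_mono) (rule next_expect_age_le)
  also have "\<dots> = rho * expect n (\<lambda>s. real (age s)) + 1"
    by (simp add: expect_add expect_cmult expect_const)
  also have "\<dots> \<le> rho * (1 / (1 - rho)) + 1"
    using mult_left_mono[OF Suc rho_bounds(1)] by simp
  also have "\<dots> = 1 / (1 - rho)"
    using rho_bounds by (simp add: field_simps)
  finally show ?case .
qed

section \<open>The stationary distribution\<close>

lemma trans_into_000: "s \<in> SS \<Longrightarrow> trans p q ps s (pol s) (0,0,0) =
   (if s = (0,0,0) then 1 - p else if s = (1,1,0) then 0 else if fst s = 1 then q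
    else if age s \<ge> du then (1 - p) * ps else 0)"
  by (erule SS_cases) (use du1 in \<open>auto simp: trans_def src_def age_def age_upd_def switching_def algebra_simps\<close>)

lemma trans_into_110: "s \<in> SS \<Longrightarrow> trans p q ps s (pol s) (1,1,0) =
   (if s = (0,0,0) then p * ps else if s = (1,1,0) then 1 - q else if fst s = 1 then (1 - q) * ps else p)"
  by (erule SS_cases) (use du1 in \<open>auto simp: trans_def src_def age_upd_def switching_def algebra_simps\<close>)

lemma trans_into_10: "s \<in> SS \<Longrightarrow> trans p q ps s (pol s) (1,0,Suc k) =
   (if s = (0,0,0) \<and> k = 0 then p * pf else if s = (1,0,k) \<and> k \<ge> 1 then r10 else 0)"
  by (erule SS_cases) (use du1 in \<open>auto simp: trans_def src_def age_upd_def switching_def algebra_simps\<close>)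

lemma trans_into_01: "s \<in> SS \<Longrightarrow> trans p q ps s (pol s) (0,1,Suc k) =
   (if s = (1,1,0) \<and> k = 0 then q
    else if s = (0,1,k) \<and> k \<ge> 1 then (if du \<le> k then r01 else 1 - p) else 0)"
  by (erule SS_cases) (use du1 in \<open>auto simp: trans_def src_def age_upd_def switching_def algebra_simps\<close>)

lemma has_sum_unique_predecessor:
  assumes "s0 \<in> SS" "\<And>s. s \<in> SS \<Longrightarrow> s \<noteq> s0 \<Longrightarrow> trans p q ps s (pol s) s' = 0"
  shows "((\<lambda>s. g s * trans p q ps s (pol s) s') has_sum g s0 * trans p q ps s0 (pol s0) s') SS"
  using assms by (intro has_sum_single_point) auto

lemma balance_10:
  "((\<lambda>s. g s * trans p q ps s (pol s) (1,0,Suc k)) has_sum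
     (if k = 0 then g (0,0,0) * (p * pf) else g (1,0,k) * r10)) SS"
proof -
  define s0 :: state where "s0 = (if k = 0 then (0,0,0) else (1,0,k))"
  have "s0 \<in> SS" by (auto simp: s0_def SS_def)
  then have "((\<lambda>s. g s * trans p q ps s (pol s) (1,0,Suc k)) has_sum
      g s0 * trans p q ps s0 (pol s0) (1,0,Suc k)) SS"
  proof (rule has_sum_unique_predecessor)
    fix s assume "s \<in> SS" "s \<noteq> s0"
    then show "trans p q ps s (pol s) (1,0,Suc k) = 0"
      unfolding trans_into_10[OF \<open>s \<in> SS\<close>] s0_def by auto
  qed
  then show ?thesis using trans_into_10[OF \<open>s0 \<in> SS\<close>] by (auto simp: s0_def)
qed

lemma balance_01:
  "((\<lambda>s. g s * trans p q ps s (pol s) (0,1,Suc k)) has_sum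
     (if k = 0 then g (1,1,0) * q else g (0,1,k) * (if du \<le> k then r01 else 1 - p))) SS"
proof -
  define s0 :: state where "s0 = (if k = 0 then (1,1,0) else (0,1,k))"
  have "s0 \<in> SS" by (auto simp: s0_def SS_def)
  then have "((\<lambda>s. g s * trans p q ps s (pol s) (0,1,Suc k)) has_sum
      g s0 * trans p q ps s0 (pol s0) (0,1,Suc k)) SS"
  proof (rule has_sum_unique_predecessor)
    fix s assume "s \<in> SS" "s \<noteq> s0"
    then show "trans p q ps s (pol s) (0,1,Suc k) = 0"
      unfolding trans_into_01[OF \<open>s \<in> SS\<close>] s0_def by auto
  qed
  then show ?thesis using trans_into_01[OF \<open>s0 \<in> SS\<close>] by (auto simp: s0_def)
qed

lemma stationary_cong:
  assumes "\<And>s. s \<in> SS \<Longrightarrow> \<nu> s = \<nu>' s"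
  shows "stationary p q ps pol \<nu> \<longleftrightarrow> stationary p q ps pol \<nu>'"
proof -
  have "(\<nu> has_sum c) SS \<longleftrightarrow> (\<nu>' has_sum c) SS"
    "((\<lambda>s. \<nu> s * f s) has_sum c) SS \<longleftrightarrow> ((\<lambda>s. \<nu>' s * f s) has_sum c) SS" for c f
    using assms by (auto intro!: has_sum_cong)
  then show ?thesis using assms unfolding stationary_def by auto
qed

definition nu_from :: "real \<Rightarrow> real \<Rightarrow> state \<Rightarrow> real" where
  "nu_from n0 n1 = (\<lambda>(x, xh, k).
     if (x, xh, k) = (0, 0, 0) then n0
     else if (x, xh, k) = (1, 1, 0) then n1
     else if x = 1 \<and> xh = 0 then p * pf * r10 ^ (k - 1) * n0
     else if x = 0 \<and> xh = 1 then
       (if k \<le> du then q * (1 - p) ^ (k - 1) * n1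
        else q * (1 - p) ^ (du - 1) * r01 ^ (k - du) * n1)
     else 0)"

lemma nu_from_000_110 [simp]: "nu_from n0 n1 (0,0,0) = n0" "nu_from n0 n1 (1,1,0) = n1"
  by (simp_all add: nu_from_def)

lemma nu_from_10_Suc:
  "nu_from n0 n1 (1,0,Suc k) = (if k = 0 then n0 * (p * pf) else nu_from n0 n1 (1,0,k) * r10)"
  by (cases k) (auto simp: nu_from_def)

lemma nu_from_01_Suc:
  "nu_from n0 n1 (0,1,Suc k) =
     (if k = 0 then n1 * q else nu_from n0 n1 (0,1,k) * (if du \<le> k then r01 else 1 - p))"
proof -
  consider "k = 0" | "1 \<le> k" "Suc k \<le> du" | "k = du" | "k > du" by linarith
  then show ?thesis
  proof cases
    case 2 then show ?thesis by (cases k) (auto simp: nu_from_def)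
  qed (use du1 in \<open>auto simp: nu_from_def Suc_diff_le\<close>)
qed

lemma nu_from_nonneg: "0 \<le> n0 \<Longrightarrow> 0 \<le> n1 \<Longrightarrow> 0 \<le> nu_from n0 n1 s"
  using p0 p1 q0 q1 ps0 ps1 by (auto simp: nu_from_def split: prod.splits)

lemma stationary_eq_nu_from:
  assumes "stationary p q ps pol \<nu>" "s \<in> SS"
  shows "\<nu> s = nu_from (\<nu> (0,0,0)) (\<nu> (1,1,0)) s"
proof -
  define g where "g = nu_from (\<nu> (0,0,0)) (\<nu> (1,1,0))"
  have bal: "((\<lambda>s. \<nu> s * trans p q ps s (pol s) s') has_sum \<nu> s') SS" if "s' \<in> SS" for s'
    using assms(1) that unfolding stationary_def by blast
  have at_10: "\<nu> (1,0,Suc k) = g (1,0,Suc k)" for k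
  proof (induction k)
    case (Suc k)
    then show ?case
      using has_sum_unique[OF bal balance_10[of \<nu> "Suc k"]] nu_from_10_Suc[of _ _ "Suc k"]
      by (simp add: SS_def g_def)
  qed (use has_sum_unique[OF bal balance_10[of \<nu> 0]] in \<open>simp add: SS_def g_def nu_from_def\<close>)
  have at_01: "\<nu> (0,1,Suc k) = g (0,1,Suc k)" for k
  proof (induction k)
    case (Suc k)
    then show ?case
      using has_sum_unique[OF bal balance_01[of \<nu> "Suc k"]] nu_from_01_Suc[of _ _ "Suc k"]
      by (simp add: SS_def g_def)
  qed (use has_sum_unique[OF bal balance_01[of \<nu> 0]] du1 in \<open>simp add: SS_def g_def nu_from_def\<close>)
  from assms(2) show ?thesis
  proof (cases rule: SS_cases)
    case (3 d)
    then show ?thesis using at_10[of "d - 1"] by (cases d) (simp_all add: g_def)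
  next
    case (4 d)
    then show ?thesis using at_01[of "d - 1"] by (cases d) (simp_all add: g_def)
  qed (simp_all add: nu_from_def)
qed

definition "a1 = p * pf / (1 - r10)"
definition "A = p / ((1 - q) * (1 - r10))"
definition "B = q * (1 - p) ^ (du - 1) / (1 - r01)"
definition "b1 = q * (1 - (1 - p) ^ (du - 1)) / (1 - (1 - p)) + B"
definition "D = (1 + a1) * (1 - p) * B + (1 + b1) * (1 - q) * A"
definition "n000 = (1 - p) * B / D"
definition "n110 = (1 - q) * A / D"

lemma ratio_bounds: "0 \<le> r10" "r10 < 1" "0 \<le> r01" "r01 < 1"
proof -
  have "r10 \<le> (1 - q) * 1" "r01 \<le> (1 - p) * 1"
    using p1 q1 ps0 by (intro mult_left_mono; simp)+
  then show "r10 < 1" "r01 < 1" using p0 q0 by auto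
qed (use p1 q1 ps1 in auto)

lemma nonzero_denominators: "1 - r10 \<noteq> 0" "1 - r01 \<noteq> 0" "1 - q \<noteq> 0" "p \<noteq> 0" "ps \<noteq> 0"
  using ratio_bounds p0 q1 ps0 by auto

lemma constants_pos: "0 \<le> a1" "0 < A" "0 < B" "0 \<le> b1" "0 < D"
proof -
  show a: "0 \<le> a1" unfolding a1_def using ratio_bounds p0 ps1 by simp
  show "0 < A" unfolding A_def using ratio_bounds p0 q1 by simp
  show "0 < B" unfolding B_def using ratio_bounds q0 p1 by simp
  moreover have "(1 - p) ^ (du - 1) \<le> 1" using p0 p1 by (intro power_le_one) auto
  ultimately show b: "0 \<le> b1" unfolding b1_def using p0 q0 by simp
  have "0 < (1 + a1) * (1 - p) * B" "0 < (1 + b1) * (1 - q) * A"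
    using a b \<open>0 < A\<close> \<open>0 < B\<close> p1 q1 by simp_all
  then show "0 < D" unfolding D_def by linarith
qed

lemma n000_n110_pos: "0 < n000" "0 < n110"
  using constants_pos p1 q1 unfolding n000_def n110_def by auto

lemma n000_n110_ratio: "(1 - q) * A * n000 = (1 - p) * B * n110"
  unfolding n000_def n110_def by (simp add: field_simps)

lemma A_eq: "(1 - q) * A = p / (1 - r10)"
  unfolding A_def using nonzero_denominators by simp

lemma a1_eq: "(1 + a1) * (1 - r10) = 1 - r10 + p * pf"
  unfolding a1_def using nonzero_denominators by (simp add: field_simps)

lemma B_eq: "B * (1 - r01) = q * (1 - p) ^ (du - 1)"
  unfolding B_def using nonzero_denominators by simp

lemma b1_eq: "p * b1 = q * (1 - (1 - p) ^ (du - 1)) + p * B"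
  unfolding b1_def using nonzero_denominators by (simp add: distrib_left)

lemma a1_A_eq: "q * a1 + ps * ((1 - q) * A) = p"
proof -
  have "q * a1 + ps * ((1 - q) * A) = (q * (p * pf) + ps * p) / (1 - r10)"
    unfolding a1_def A_eq by (simp add: add_divide_distrib)
  also have "q * (p * pf) + ps * p = p * (1 - r10)"
    by (simp add: algebra_simps)
  finally show ?thesis using nonzero_denominators by simp
qed

lemma a1_A_eq': "p + (1 - q) * a1 = (1 - q) * A"
  unfolding a1_def A_eq using nonzero_denominators by (simp add: field_simps)

lemma B_b1_eq: "(1 - p) * ps * B + p * b1 = q"
proof -
  have "(1 - p) * ps * B + p * b1 = B * (1 - r01) + q * (1 - (1 - p) ^ (du - 1))"
    unfolding b1_eq by (simp add: algebra_simps)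
  then show ?thesis unfolding B_eq by (simp add: algebra_simps)
qed

lemma D_closed_form: "D * (1 - r10) = (p + q) * (1 + r01 * B)"
proof -
  have "D * (1 - r10) = (1 + a1) * (1 - r10) * (1 - p) * B + (1 + b1) * ((1 - q) * A) * (1 - r10)"
    unfolding D_def by (simp add: algebra_simps)
  also have "\<dots> = (1 - r10 + p * pf) * (1 - p) * B + (p + p * b1)"
    unfolding a1_eq A_eq using nonzero_denominators by (simp add: field_simps)
  also have "\<dots> = (1 - r10 + p * pf) * (1 - p) * B + (p + q - B * (1 - r01) + p * B)"
    unfolding b1_eq B_eq by (simp add: algebra_simps)
  also have "\<dots> = (p + q) * (1 + r01 * B)"
    by (simp add: algebra_simps)
  finally show ?thesis .
qed

lemma balance_000_iff_ratio:
  "(1 - p) * n0 + (q * a1 * n0 + (1 - p) * ps * B * n1) = n0 \<longleftrightarrow> (1 - q) * A * n0 = (1 - p) * B * n1"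
proof -
  have "q * a1 + ps * ((1 - q) * A) - p = 0"
    using a1_A_eq by simp
  then have "(1 - p) * n0 + (q * a1 * n0 + (1 - p) * ps * B * n1) - n0 = ps * ((1 - p) * B * n1 - (1 - q) * A * n0)"
    by algebra
  then show ?thesis
    using nonzero_denominators by (smt (verit) mult_eq_0_iff)
qed

lemma has_sum_nu_from_10: "((\<lambda>d. nu_from n0 n1 (1,0,Suc d)) has_sum (a1 * n0)) UNIV"
  using has_sum_geometric[of r10 "p * pf * n0"] ratio_bounds
  by (simp add: nu_from_def a1_def mult_ac)

lemma nu_from_01_tail: "nu_from n0 n1 (0,1,du + j) = (q * (1 - p) ^ (du - 1) * n1) * r01 ^ j"
  using du1 by (cases j) (auto simp: nu_from_def mult_ac)

lemma has_sum_nu_from_01: "((\<lambda>d. nu_from n0 n1 (0,1,Suc d)) has_sum (b1 * n1)) UNIV"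
proof -
  have "((\<lambda>j. nu_from n0 n1 (0,1,Suc (du - 1 + j))) has_sum B * n1) UNIV"
    using has_sum_geometric[of r01 "q * (1 - p) ^ (du - 1) * n1"] ratio_bounds du1 nu_from_01_tail
    by (simp add: B_def)
  then have "((\<lambda>d. nu_from n0 n1 (0,1,Suc d)) has_sum
      ((\<Sum>k<du - 1. nu_from n0 n1 (0,1,Suc k)) + B * n1)) UNIV"
    by (rule has_sum_from_tail)
  moreover have "(\<Sum>k<du - 1. nu_from n0 n1 (0,1,Suc k)) = q * n1 * (\<Sum>k<du - 1. (1 - p) ^ k)"
    by (auto simp: nu_from_def sum_distrib_left mult_ac intro!: sum.cong)
  ultimately show ?thesis
    using p0 by (simp add: sum_gp_strict b1_def algebra_simps)
qed

lemma has_sum_nu_from: "(nu_from n0 n1 has_sum ((1 + a1) * n0 + (1 + b1) * n1)) SS"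
  using has_sum_SS[OF has_sum_nu_from_10 has_sum_nu_from_01, of n0 n1]
  by (simp add: nu_from_def algebra_simps)

lemma balance_000:
  "((\<lambda>s. nu_from n0 n1 s * trans p q ps s (pol s) (0,0,0)) has_sum
     ((1 - p) * n0 + (q * a1 * n0 + (1 - p) * ps * B * n1))) SS"
proof -
  let ?f = "\<lambda>s. nu_from n0 n1 s * trans p q ps s (pol s) (0,0,0)"
  have s10: "((\<lambda>d. ?f (1,0,Suc d)) has_sum (a1 * n0 * q)) UNIV"
    using has_sum_cmult_left[OF has_sum_nu_from_10, where c=q] by (subst trans_into_000) (auto simp: SS_def)
  define c where "c = q * (1 - p) ^ (du - 1) * n1 * ((1 - p) * ps)"
  have tail: "?f (0,1,Suc (du - 1 + j)) = c * r01 ^ j" for j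
    using du1 nu_from_01_tail[of n0 n1 j] by (subst trans_into_000) (auto simp: SS_def age_def c_def)
  have "c / (1 - r01) = (1 - p) * ps * B * n1"
    unfolding c_def B_def by simp
  then have "((\<lambda>j. ?f (0,1,Suc (du - 1 + j))) has_sum ((1 - p) * ps * B * n1)) UNIV"
    using has_sum_geometric[of r01 c] ratio_bounds unfolding tail by simp
  then have "((\<lambda>d. ?f (0,1,Suc d)) has_sum ((\<Sum>k<du - 1. ?f (0,1,Suc k)) + (1 - p) * ps * B * n1)) UNIV"
    by (rule has_sum_from_tail)
  moreover have "(\<Sum>k<du - 1. ?f (0,1,Suc k)) = 0"
    by (rule sum.neutral) (auto simp: trans_into_000 SS_def age_def)
  ultimately have s01: "((\<lambda>d. ?f (0,1,Suc d)) has_sum ((1 - p) * ps * B * n1)) UNIV"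
    by simp
  have "trans p q ps (0,0,0) (pol (0,0,0)) (0,0,0) = 1 - p" "trans p q ps (1,1,0) (pol (1,1,0)) (0,0,0) = 0"
    by (subst trans_into_000; simp add: SS_def)+
  then have "?f (0,0,0) + (?f (1,1,0) + (a1 * n0 * q + (1 - p) * ps * B * n1))
      = (1 - p) * n0 + (q * a1 * n0 + (1 - p) * ps * B * n1)"
    by (simp only: nu_from_000_110) (simp add: algebra_simps)
  then show ?thesis
    using has_sum_SS[OF s10 s01] by metis
qed

lemma balance_110:
  "((\<lambda>s. nu_from n0 n1 s * trans p q ps s (pol s) (1,1,0)) has_sum
     (p * ps * n0 + ((1 - q) * n1 + (a1 * n0 * ((1 - q) * ps) + b1 * n1 * p)))) SS"
proof -
  have s10: "((\<lambda>d. nu_from n0 n1 (1,0,Suc d) * trans p q ps (1,0,Suc d) (pol (1,0,Suc d)) (1,1,0))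
      has_sum (a1 * n0 * ((1 - q) * ps))) UNIV"
    using has_sum_cmult_left[OF has_sum_nu_from_10, where c="(1 - q) * ps"]
    by (subst trans_into_110) (auto simp: SS_def)
  have s01: "((\<lambda>d. nu_from n0 n1 (0,1,Suc d) * trans p q ps (0,1,Suc d) (pol (0,1,Suc d)) (1,1,0))
      has_sum (b1 * n1 * p)) UNIV"
    using has_sum_cmult_left[OF has_sum_nu_from_01, where c=p] by (subst trans_into_110) (auto simp: SS_def)
  have "trans p q ps (0,0,0) (pol (0,0,0)) (1,1,0) = p * ps" "trans p q ps (1,1,0) (pol (1,1,0)) (1,1,0) = 1 - q"
    by (subst trans_into_110; simp add: SS_def)+
  then have "nu_from n0 n1 (0,0,0) * trans p q ps (0,0,0) (pol (0,0,0)) (1,1,0)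
      + (nu_from n0 n1 (1,1,0) * trans p q ps (1,1,0) (pol (1,1,0)) (1,1,0)
      + (a1 * n0 * ((1 - q) * ps) + b1 * n1 * p))
      = p * ps * n0 + ((1 - q) * n1 + (a1 * n0 * ((1 - q) * ps) + b1 * n1 * p))"
    by (simp add: nu_from_def)
  then show ?thesis
    using has_sum_SS[OF s10 s01] by metis
qed

lemma stationary_nu_from: "stationary p q ps pol (nu_from n000 n110)"
proof -
  let ?\<nu> = "nu_from n000 n110"
  have "(1 + a1) * n000 + (1 + b1) * n110 = ((1 + a1) * (1 - p) * B + (1 + b1) * (1 - q) * A) / D"
    unfolding n000_def n110_def by (simp add: add_divide_distrib)
  then have total: "(1 + a1) * n000 + (1 + b1) * n110 = 1"
    using constants_pos by (simp add: D_def[symmetric])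
  have at_000: "(1 - p) * n000 + (q * a1 * n000 + (1 - p) * ps * B * n110) = n000"
    using n000_n110_ratio balance_000_iff_ratio by blast
  have at_110: "p * ps * n000 + ((1 - q) * n110 + (a1 * n000 * ((1 - q) * ps) + b1 * n110 * p)) = n110"
    using a1_A_eq' B_b1_eq n000_n110_ratio by algebra
  have "(?\<nu> has_sum 1) SS"
    using has_sum_nu_from[of n000 n110] total by simp
  moreover have "\<forall>s\<in>SS. ?\<nu> s \<ge> 0"
    using nu_from_nonneg n000_n110_pos by (simp add: less_imp_le)
  moreover have "((\<lambda>s. ?\<nu> s * trans p q ps s (pol s) s') has_sum ?\<nu> s') SS" if "s' \<in> SS" for s'
    using that
  proof (cases rule: SS_cases)
    case 1 then show ?thesis using balance_000[of n000 n110] at_000 by simp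
  next
    case 2 then show ?thesis using balance_110[of n000 n110] by (simp only: 2 nu_from_000_110 at_110)
  next
    case (3 d)
    then obtain k where "s' = (1,0,Suc k)" by (cases d) auto
    then show ?thesis using balance_10[of ?\<nu> k] by (simp only: nu_from_10_Suc nu_from_000_110)
  next
    case (4 d)
    then obtain k where "s' = (0,1,Suc k)" by (cases d) auto
    then show ?thesis using balance_01[of ?\<nu> k] by (simp only: nu_from_01_Suc nu_from_000_110)
  qed
  ultimately show ?thesis
    unfolding stationary_def by blast
qed

lemma stationary_iff: "stationary p q ps pol \<nu> \<longleftrightarrow> (\<forall>s\<in>SS. \<nu> s = nu_from n000 n110 s)"
proof
  assume st: "stationary p q ps pol \<nu>"
  define n0 n1 where "n0 = \<nu> (0,0,0)" and "n1 = \<nu> (1,1,0)"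
  have eq: "\<nu> s = nu_from n0 n1 s" if "s \<in> SS" for s
    using stationary_eq_nu_from[OF st that] by (simp add: n0_def n1_def)
  then have "stationary p q ps pol (nu_from n0 n1)"
    using st stationary_cong by blast
  moreover have "(0,0,0) \<in> SS" "nu_from n0 n1 (0,0,0) = n0"
    by (simp_all add: SS_def)
  ultimately have "(nu_from n0 n1 has_sum 1) SS"
    "((\<lambda>s. nu_from n0 n1 s * trans p q ps s (pol s) (0,0,0)) has_sum n0) SS"
    unfolding stationary_def by metis+
  then have total: "(1 + a1) * n0 + (1 + b1) * n1 = 1"
    and at_000: "(1 - p) * n0 + (q * a1 * n0 + (1 - p) * ps * B * n1) = n0"
    using has_sum_unique[OF has_sum_nu_from] has_sum_unique[OF balance_000] by blast+
  then have ratio: "(1 - q) * A * n0 = (1 - p) * B * n1"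
    using balance_000_iff_ratio by blast
  have "n1 * D = (1 - q) * A * ((1 + a1) * n0 + (1 + b1) * n1)"
    unfolding D_def using ratio by algebra
  then have "n1 = n110"
    using total constants_pos unfolding n110_def by (simp add: eq_divide_eq)
  moreover have "(1 - q) * A \<noteq> 0"
    using constants_pos q1 by simp
  ultimately have "n0 = n000"
    using ratio n000_n110_ratio by (metis mult.assoc mult_left_cancel)
  then show "\<forall>s\<in>SS. \<nu> s = nu_from n000 n110 s"
    using eq \<open>n1 = n110\<close> by simp
next
  assume "\<forall>s\<in>SS. \<nu> s = nu_from n000 n110 s"
  then show "stationary p q ps pol \<nu>"
    using stationary_cong stationary_nu_from by blast
qed

end


section \<open>The Poisson equation and the average cost\<close>

locale switching_cost = switching_chain +
  fixes \<beta> lam :: real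
begin

definition "gain = \<beta> * p * pf * n000 / (1 - r10)^2 + (1 - \<beta>) * q * psi pf (1 - p) du * n110
    + lam * ((1 + a1) * n000 + B * n110)"

text \<open>The bias \<open>h\<close> solves the Poisson equation at every state, normalised by \<open>h(0,0,0) = 0\<close>.
  On the branch (1,0,\<open>\<cdot>\<close>), and on (0,1,\<open>\<cdot>\<close>) from \<open>du\<close> on, the equation is a first-order recurrence
  in the age with constant coefficients, solved by the affine functions \<open>a10 + b10 d\<close> and
  \<open>a01 + b01 d\<close>. Below \<open>du\<close> no transmission takes place, the recurrence has coefficient \<open>1 - p\<close>,
  and its solution adds the homogeneous term \<open>K01 (1 - p)\<^sup>-\<^sup>d\<close>, with \<open>K01\<close> chosen to match
  at \<open>du\<close>. The value \<open>v11 = h(1,1,0)\<close> is then forced by the equation at (0,0,0).\<close>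
definition "b10 = r10 * \<beta> / (1 - r10)"
definition "F000 = \<beta> * p * pf + lam + p * pf * (r10 * \<beta> + b10 + lam) / (1 - r10)"
definition "v11 = (gain * (1 - r10 + p * pf) - F000 * (1 - r10)) / (p * ps)"
definition "a10 = (r10 * \<beta> + r10 * b10 + lam + (1 - q) * ps * v11 - gain) / (1 - r10)"
definition "b01 = r01 * (1 - \<beta>) / (1 - r01)"
definition "a01 = (r01 * (1 - \<beta>) + r01 * b01 + lam + p * v11 - gain) / (1 - r01)"
definition "e01 = (1 - p) * (1 - \<beta>) / p"
definition "c01 = (e01 + p * v11 - gain) / p"
definition "K01 = (a01 + b01 * real du - c01 - e01 * real du) * (1 - p) ^ du"
definition "bias01 d = (if d \<le> du then c01 + e01 * real d + K01 / (1 - p) ^ d else a01 + b01 * real d)"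

definition bias :: "state \<Rightarrow> real" where
  "bias s = (case s of (x, xh, d) \<Rightarrow>
     if x = 1 \<and> xh = 0 then a10 + b10 * real d
     else if x = 0 \<and> xh = 1 then bias01 d
     else if x = 1 then v11 else 0)"

lemma stage_cost_eq:
  "s \<in> SS \<Longrightarrow> stage_cost p q ps \<beta> lam s (pol s) =
     next_expect p q ps (pol s) s (cst \<beta>) + lam * (if pol s then 1 else 0)"
  unfolding stage_cost_def using trans_has_sum_next_expect[of s p q ps "pol s" "cst \<beta>"] by (simp add: infsumI)

lemma bias01_above: "d \<ge> du \<Longrightarrow> bias01 d = a01 + b01 * real d"
  using p1 by (cases "d = du") (simp_all add: bias01_def K01_def)

lemma poisson_000: "p * pf * \<beta> + lam = gain - p * (ps * v11 + pf * (a10 + b10))"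
proof -
  define i j where "i = 1 / (1 - r10)" and "j = 1 / (p * ps)"
  have "(1 - r10) * i = 1" "(p * ps) * j = 1"
    unfolding i_def j_def using nonzero_denominators by simp_all
  moreover have "b10 = r10 * \<beta> * i"
    and "F000 = \<beta> * p * pf + lam + p * pf * (r10 * \<beta> + b10 + lam) * i"
    and "v11 = (gain * (1 - r10 + p * pf) - F000 * (1 - r10)) * j"
    and "a10 = (r10 * \<beta> + r10 * b10 + lam + (1 - q) * ps * v11 - gain) * i"
    unfolding b10_def F000_def v11_def a10_def i_def j_def by simp_all
  ultimately show ?thesis by algebra
qed

lemma poisson_10:
  "r10 * (\<beta> * (real d + 1)) + lam = gain + (a10 + b10 * real d) - (1 - q) * (ps * v11 + pf * (a10 + b10 * (real d + 1)))"
proof -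
  define i where "i = 1 / (1 - r10)"
  have "(1 - r10) * i = 1"
    unfolding i_def using nonzero_denominators by simp
  moreover have "b10 = r10 * \<beta> * i" "a10 = (r10 * \<beta> + r10 * b10 + lam + (1 - q) * ps * v11 - gain) * i"
    unfolding b10_def a10_def i_def by simp_all
  ultimately show ?thesis by algebra
qed

lemma poisson_01_above:
  "r01 * ((1 - \<beta>) * (real d + 1)) + lam = gain + (a01 + b01 * real d) - ((1 - p) * (pf * (a01 + b01 * (real d + 1))) + p * v11)"
proof -
  define i where "i = 1 / (1 - r01)"
  have "(1 - r01) * i = 1"
    unfolding i_def using nonzero_denominators by simp
  moreover have "b01 = r01 * (1 - \<beta>) * i" "a01 = (r01 * (1 - \<beta>) + r01 * b01 + lam + p * v11 - gain) * i"
    unfolding b01_def a01_def i_def by simp_all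
  ultimately show ?thesis by algebra
qed

lemma poisson_01_below:
  assumes "d + 1 \<le> du"
  shows "(1 - p) * ((1 - \<beta>) * real (Suc d)) = gain + bias01 d - ((1 - p) * bias01 (Suc d) + p * v11)"
proof -
  define z j where "z = K01 / (1 - p) ^ Suc d" and "j = 1 / p"
  have "p * j = 1"
    unfolding j_def using nonzero_denominators by simp
  moreover have "bias01 d = c01 + e01 * real d + (1 - p) * z" "bias01 (Suc d) = c01 + e01 * (real d + 1) + z"
    unfolding bias01_def z_def using assms p1 by (simp_all add: field_simps)
  moreover have "e01 = (1 - p) * (1 - \<beta>) * j" "c01 = (e01 + p * v11 - gain) * j"
    unfolding e01_def c01_def j_def by simp_all
  moreover have "real (Suc d) = real d + 1"
    by simp
  ultimately show ?thesis by algebra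
qed

lemma psi_scaled:
  "psi pf (1 - p) du * p = p + (1 - p) * (1 + p) * inverse p
     + p * (1 - p) ^ (du - 1) * (r01 * inverse (1 - r01) ^ 2 + r01 * real du * inverse (1 - r01)
        - (1 - p) * inverse p ^ 2 - (1 - p) * real du * inverse p)"
proof -
  define X n i1 i2 where "X = (1 - p) ^ (du - 1)" and "n = real du"
    and "i1 = inverse p" and "i2 = inverse (1 - r01)"
  have "psi pf (1 - p) du = (1 - ((1 - p) + p * n) * X) * i1 ^ 2 + (r01 + (1 - r01) * n) * X * i2 ^ 2"
    unfolding psi_def X_def n_def i1_def i2_def by (simp add: divide_inverse power_inverse)
  moreover have "p * i1 = 1" "(1 - r01) * i2 = 1"
    unfolding i1_def i2_def using nonzero_denominators by simp_all
  ultimately show ?thesis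
    unfolding X_def[symmetric] n_def[symmetric] i1_def[symmetric] i2_def[symmetric] by algebra
qed

lemma F000_scaled: "F000 * (1 - r10) = \<beta> * p * pf / (1 - r10) + lam * (1 - r10 + p * pf)"
proof -
  have "F000 * (1 - r10) = (\<beta> * p * pf + lam) * (1 - r10) + p * pf * (r10 * \<beta> + b10 + lam)"
    unfolding F000_def using nonzero_denominators by (simp add: distrib_right)
  moreover have "\<beta> * p * pf / (1 - r10) = \<beta> * p * pf + p * pf * b10"
    unfolding b10_def using nonzero_denominators by (simp add: field_simps)
  ultimately show ?thesis by (simp add: algebra_simps)
qed

lemma gain_scaled:
  "gain * D * (1 - r10) = \<beta> * p * pf * (1 - p) * B / (1 - r10) + (1 - \<beta>) * q * psi pf (1 - p) du * p
     + lam * ((1 - r10 + p * pf) * (1 - p) * B + B * p)"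
proof -
  define c where "c = \<beta> * p * pf / (1 - r10)^2"
  have gain_eq: "gain = c * n000 + (1 - \<beta>) * q * psi pf (1 - p) du * n110 + lam * ((1 + a1) * n000 + B * n110)"
    unfolding gain_def c_def by (simp add: algebra_simps)
  have expand: "gain * D * (1 - r10) = (c * (1 - r10)) * (n000 * D)
      + (1 - \<beta>) * q * psi pf (1 - p) du * ((n110 * D) * (1 - r10))
      + lam * ((1 + a1) * (1 - r10) * (n000 * D) + B * ((n110 * D) * (1 - r10)))"
    unfolding gain_eq by (simp add: algebra_simps)
  have c: "c * (1 - r10) = \<beta> * p * pf / (1 - r10)"
    unfolding c_def using nonzero_denominators by (simp add: power2_eq_square)
  have n000: "n000 * D = (1 - p) * B"
    unfolding n000_def using constants_pos by simp
  have n110: "n110 * D * (1 - r10) = p"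
    unfolding n110_def A_eq using constants_pos nonzero_denominators by simp
  show ?thesis
    unfolding expand c n000 n110 a1_eq by (simp add: algebra_simps)
qed

lemma bias01_gap:
  "a01 + b01 * real du - c01 - e01 * real du = ((1 - p) * ps / (1 - r01)) * (gain / p - v11)
     + ((r01 * (1 - \<beta>) + r01 * b01 + lam) / (1 - r01) + b01 * real du - e01 / p - e01 * real du)"
proof -
  have "a01 = (r01 * (1 - \<beta>) + r01 * b01 + lam) / (1 - r01) + (p * v11 - gain) / (1 - r01)"
    unfolding a01_def by (simp add: add_divide_distrib[symmetric] algebra_simps)
  moreover have "c01 = e01 / p + v11 - gain / p"
    unfolding c01_def using nonzero_denominators by (simp add: field_simps)
  moreover have "(p * v11 - gain) / (1 - r01) - v11 + gain / p = ((1 - p) * ps / (1 - r01)) * (gain / p - v11)"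
  proof -
    have "(p * v11 - gain) / (1 - r01) - v11 + gain / p
        = ((p * v11 - gain) * p - v11 * (1 - r01) * p + gain * (1 - r01)) / ((1 - r01) * p)"
      using nonzero_denominators by (simp add: field_simps)
    also have "(p * v11 - gain) * p - v11 * (1 - r01) * p + gain * (1 - r01) = (1 - p) * ps * (gain - p * v11)"
      by (simp add: algebra_simps)
    finally show ?thesis
      using nonzero_denominators by (simp add: field_simps)
  qed
  ultimately show ?thesis by (simp add: algebra_simps)
qed

text \<open>The one Poisson equation not used to construct the bias. It is the closed form of
  \<open>gain\<close> (with \<open>\<psi>\<close>) that makes it hold.\<close>
lemma poisson_110: "q * (1 - \<beta>) = gain + v11 - q * bias01 1 - (1 - q) * v11"
proof -
  define X n T where "X = (1 - p) ^ (du - 1)" and "n = real du" and "T = gain / p - v11"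
  define E where "E = (r01 * (1 - \<beta>) + r01 * b01 + lam) / (1 - r01) + b01 * n - e01 / p - e01 * n"
  define i1 i2 where "i1 = inverse p" and "i2 = inverse (1 - r01)"
  have e1: "p * i1 = 1" and e2: "(1 - r01) * i2 = 1"
    unfolding i1_def i2_def using nonzero_denominators by simp_all
  have bias01_1: "bias01 1 = c01 + e01 + (a01 + b01 * n - c01 - e01 * n) * X"
  proof -
    have "(1 - p) ^ du = (1 - p) * X" unfolding X_def using du1 by (cases du) auto
    then show ?thesis unfolding bias01_def K01_def n_def using du1 p1 by simp
  qed
  have c01: "c01 + e01 = e01 / p + e01 - T"
    unfolding c01_def T_def using nonzero_denominators by (simp add: field_simps)
  have qX: "q * X = B * (1 - r01)" unfolding X_def B_eq ..
  have T: "p * ps * T = F000 * (1 - r10) - gain * pf * (p + q)"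
    unfolding T_def v11_def using nonzero_denominators by (simp add: field_simps)
  have e01: "e01 = (1 - p) * (1 - \<beta>) * i1" unfolding e01_def i1_def by (simp add: divide_inverse)
  have E: "E = (1 - \<beta>) * (r01 * i2^2 + r01 * n * i2 - (1 - p) * i1^2 - (1 - p) * n * i1) + lam * i2"
  proof -
    have "b01 = r01 * (1 - \<beta>) * i2" unfolding b01_def i2_def by (simp add: divide_inverse)
    moreover have "E = (r01 * (1 - \<beta>) + r01 * b01 + lam) * i2 + b01 * n - e01 * i1 - e01 * n"
      unfolding E_def i1_def i2_def by (simp add: divide_inverse)
    ultimately show ?thesis unfolding e01 using e1 e2 by algebra
  qed
  have "p * (gain + v11 - q * bias01 1 - (1 - q) * v11)
      = gain * (p + q) - q * e01 * (1 + p) - (q * X / (1 - r01)) * (1 - p) * (p * ps * T) - p * q * X * E"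
    unfolding bias01_1 bias01_gap[folded n_def, folded T_def E_def] c01
    using nonzero_denominators by (simp add: T_def field_simps)
  also have "\<dots> = gain * (p + q) - q * e01 * (1 + p) - B * (1 - p) * (F000 * (1 - r10) - gain * pf * (p + q))
      - p * q * X * E"
    unfolding T using qX nonzero_denominators by simp
  also have "\<dots> = gain * D * (1 - r10) - q * e01 * (1 + p) - B * (1 - p) * (F000 * (1 - r10)) - p * q * X * E"
  proof -
    have "gain * D * (1 - r10) = gain * ((p + q) * (1 + r01 * B))"
      using D_closed_form by (simp add: mult.assoc)
    then show ?thesis by (simp add: algebra_simps)
  qed
  also have "\<dots> = (1 - \<beta>) * q * (psi pf (1 - p) du * p) + lam * B * p - q * e01 * (1 + p) - p * q * X * E"
    unfolding gain_scaled F000_scaled by (simp add: algebra_simps)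
  also have "\<dots> = p * (q * (1 - \<beta>))"
    unfolding psi_scaled[folded i1_def i2_def X_def n_def] E e01 using e1 e2 qX by algebra
  finally show ?thesis
    using nonzero_denominators by simp
qed

lemma poisson:
  assumes "s \<in> SS"
  shows "stage_cost p q ps \<beta> lam s (pol s) = gain + bias s - next_expect p q ps (pol s) s bias"
  using assms
proof (cases rule: SS_cases)
  case 1
  then show ?thesis using stage_cost_eq[OF assms] poisson_000
    by (simp add: next_expect_def src_def age_upd_def switching_def cst_def bias_def)
next
  case 2
  then show ?thesis using stage_cost_eq[OF assms] poisson_110 du1
    by (simp add: next_expect_def src_def age_upd_def switching_def cst_def bias_def)
next
  case (3 d)
  then have "stage_cost p q ps \<beta> lam s (pol s) = r10 * (\<beta> * (real d + 1)) + lam"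
    using stage_cost_eq[OF assms] by (simp add: next_expect_def src_def age_upd_def switching_def cst_def)
  moreover have "gain + bias s - next_expect p q ps (pol s) s bias
      = gain + (a10 + b10 * real d) - (1 - q) * (ps * v11 + pf * (a10 + b10 * (real d + 1)))"
    using 3 by (simp add: next_expect_def src_def age_upd_def switching_def bias_def)
  ultimately show ?thesis
    using poisson_10[of d] by simp
next
  case (4 d)
  show ?thesis
  proof (cases "du \<le> d")
    case True
    then show ?thesis
      using 4 stage_cost_eq[OF assms] poisson_01_above[of d] bias01_above[of d] bias01_above[of "Suc d"]
      by (simp add: next_expect_def src_def age_upd_def switching_def cst_def bias_def algebra_simps)
  next
    case False
    then show ?thesis
      using 4 stage_cost_eq[OF assms] poisson_01_below[of d]
      by (simp add: next_expect_def src_def age_upd_def switching_def cst_def bias_def)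
  qed
qed

definition "bias_const = \<bar>a10\<bar> + \<bar>c01\<bar> + \<bar>K01\<bar> / (1 - p) ^ du + \<bar>a01\<bar> + \<bar>v11\<bar>"
definition "bias_slope = \<bar>b10\<bar> + \<bar>e01\<bar> + \<bar>b01\<bar>"

lemma bias_const_ge:
  "\<bar>a10\<bar> \<le> bias_const" "\<bar>c01\<bar> + \<bar>K01\<bar> / (1 - p) ^ du \<le> bias_const" "\<bar>a01\<bar> \<le> bias_const" "\<bar>v11\<bar> \<le> bias_const"
  using p1 unfolding bias_const_def by auto

lemma bias_slope_ge: "\<bar>b10\<bar> \<le> bias_slope" "\<bar>e01\<bar> \<le> bias_slope" "\<bar>b01\<bar> \<le> bias_slope"
  unfolding bias_slope_def by auto

lemma abs_affine_le: "\<bar>a + b * real d\<bar> \<le> \<bar>a\<bar> + \<bar>b\<bar> * real d"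
  by (metis abs_mult abs_of_nat abs_triangle_ineq)

lemma abs_bias01_le: "\<bar>bias01 d\<bar> \<le> bias_const + bias_slope * real d"
proof (cases "d \<le> du")
  case True
  have "(1 - p) ^ du \<le> (1 - p) ^ d"
    using True p0 p1 by (intro power_decreasing) auto
  then have "\<bar>K01\<bar> / (1 - p) ^ d \<le> \<bar>K01\<bar> / (1 - p) ^ du"
    using p1 by (intro divide_left_mono) auto
  moreover have "\<bar>bias01 d\<bar> \<le> \<bar>c01\<bar> + \<bar>e01\<bar> * real d + \<bar>K01\<bar> / (1 - p) ^ d"
    using True abs_affine_le[of c01 e01 d] abs_triangle_ineq[of "c01 + e01 * real d" "K01 / (1 - p) ^ d"] p1
    by (simp add: bias01_def abs_divide)
  moreover have "\<bar>e01\<bar> * real d \<le> bias_slope * real d"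
    using bias_slope_ge by (intro mult_right_mono) auto
  ultimately show ?thesis
    using bias_const_ge(2) by linarith
next
  case False
  then have "bias01 d = a01 + b01 * real d"
    by (simp add: bias01_def)
  moreover have "\<bar>b01\<bar> * real d \<le> bias_slope * real d"
    using bias_slope_ge by (intro mult_right_mono) auto
  ultimately show ?thesis
    using abs_affine_le[of a01 b01 d] bias_const_ge(3) by linarith
qed

lemma abs_bias_le: "s \<in> SS \<Longrightarrow> \<bar>bias s\<bar> \<le> bias_const + bias_slope * real (age s)"
proof (erule SS_cases)
  fix d assume "s = (1,0,d)"
  moreover have "\<bar>b10\<bar> * real d \<le> bias_slope * real d"
    using bias_slope_ge by (intro mult_right_mono) auto
  ultimately show ?thesis
    using abs_affine_le[of a10 b10 d] bias_const_ge(1) by (simp add: bias_def age_def)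
next
  fix d assume "s = (0,1,d)"
  then show ?thesis
    using abs_bias01_le[of d] by (simp add: bias_def age_def)
qed (use bias_const_ge(4) in \<open>simp_all add: bias_def age_def\<close>)

lemma abs_expect_bias_le: "\<bar>expect n bias\<bar> \<le> bias_const + bias_slope / (1 - rho)"
proof -
  have "\<bar>expect n bias\<bar> \<le> expect n (\<lambda>s. bias_const + bias_slope * real (age s))"
    by (rule order_trans[OF abs_expect_le expect_mono]) (rule abs_bias_le)
  also have "\<dots> = bias_const + bias_slope * expect n (\<lambda>s. real (age s))"
    by (simp add: expect_add expect_cmult expect_const)
  also have "\<dots> \<le> bias_const + bias_slope * (1 / (1 - rho))"
    using expect_age_bound[of n] by (intro add_left_mono mult_left_mono) (auto simp: bias_slope_def)
  finally show ?thesis by simp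
qed

lemma sum_expect_stage_cost:
  "(\<Sum>t=1..T. expect (t - 1) (\<lambda>s. stage_cost p q ps \<beta> lam s (pol s)))
     = real T * gain + expect 0 bias - expect T bias"
proof (induction T)
  case (Suc T)
  have "expect T (\<lambda>s. stage_cost p q ps \<beta> lam s (pol s))
      = expect T (\<lambda>s. (gain + bias s) - next_expect p q ps (pol s) s bias)"
    by (rule expect_cong) (rule poisson)
  also have "\<dots> = gain + expect T bias - expect (Suc T) bias"
    by (simp add: expect_diff expect_add expect_const expect_Suc)
  finally show ?case
    using Suc by (simp add: algebra_simps)
qed simp

lemma avg_cost_eq_gain: "avg_cost p q ps \<beta> lam pol = ereal gain"
proof -
  define f where "f T = (1 / real T) * (\<Sum>t=1..T. \<Sum>\<^sub>\<infinity>s\<in>SS. mu (t - 1) s * stage_cost p q ps \<beta> lam s (pol s))" for T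
  define M where "M = bias_const + bias_slope / (1 - rho)"
  have bound: "\<bar>expect n bias\<bar> \<le> M" for n
    unfolding M_def by (rule abs_expect_bias_le)
  have f: "f T = gain + (expect 0 bias - expect T bias) / real T" if "T \<ge> 1" for T
    using that unfolding f_def infsum_state_dist expect_def[symmetric] sum_expect_stage_cost
    by (simp add: field_simps)
  have "(\<lambda>T. (expect 0 bias - expect T bias) / real T) \<longlonglongrightarrow> 0"
  proof (rule Lim_null_comparison)
    show "\<forall>\<^sub>F T in sequentially. norm ((expect 0 bias - expect T bias) / real T) \<le> 2 * M / real T"
    proof (rule eventually_sequentiallyI)
      fix T :: nat
      have "\<bar>expect 0 bias - expect T bias\<bar> \<le> 2 * M"
        using bound[of 0] bound[of T] by linarith
      then show "norm ((expect 0 bias - expect T bias) / real T) \<le> 2 * M / real T"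
        by (simp add: abs_divide divide_right_mono)
    qed
  qed (rule lim_const_over_n)
  then have "(\<lambda>T. gain + (expect 0 bias - expect T bias) / real T) \<longlonglongrightarrow> gain"
    using tendsto_add[OF tendsto_const] by fastforce
  then have "f \<longlonglongrightarrow> gain"
    by (rule Lim_transform_eventually) (auto intro: eventually_sequentiallyI[of 1] simp: f)
  then show ?thesis
    unfolding avg_cost_def f_def[symmetric] by (intro lim_imp_Limsup tendsto_ereal) simp_all
qed

end

theorem lemma1:
  fixes p q ps \<beta> lam :: real and du :: nat
    and pf a1 A B b1 D n000 n110 :: real and nu :: "state \<Rightarrow> real"
  assumes "0 < p" "p < 1" "0 < q" "q < 1" "0 < ps" "ps \<le> 1"
    and "0 \<le> \<beta>" "\<beta> \<le> 1" "0 \<le> lam" "1 \<le> du"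
  defines "pf \<equiv> 1 - ps"
    and "a1 \<equiv> p * pf / (1 - (1 - q) * pf)"
    and "A \<equiv> p / ((1 - q) * (1 - (1 - q) * pf))"
    and "B \<equiv> q * (1 - p) ^ (du - 1) / (1 - (1 - p) * pf)"
    and "b1 \<equiv> q * (1 - (1 - p) ^ (du - 1)) / (1 - (1 - p)) + B"
    and "D \<equiv> (1 + a1) * (1 - p) * B + (1 + b1) * (1 - q) * A"
    and "n000 \<equiv> (1 - p) * B / D"
    and "n110 \<equiv> (1 - q) * A / D"
    and "nu \<equiv> (\<lambda>(x, xh, k).
           if (x, xh, k) = (0, 0, 0) then n000
           else if (x, xh, k) = (1, 1, 0) then n110
           else if x = 1 \<and> xh = 0 then p * pf * ((1 - q) * pf) ^ (k - 1) * n000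
           else if x = 0 \<and> xh = 1 then
             (if k \<le> du then q * (1 - p) ^ (k - 1) * n110
              else q * (1 - p) ^ (du - 1) * ((1 - p) * pf) ^ (k - du) * n110)
           else 0)"
  shows "(\<forall>\<nu>. stationary p q ps (switching 0 du) \<nu> \<longleftrightarrow>
             (\<forall>s\<in>SS. \<nu> s = nu s))
         \<and> avg_cost p q ps \<beta> lam (switching 0 du) =
             ereal (\<beta> * p * pf * n000 / (1 - (1 - q) * pf)^2
                    + (1 - \<beta>) * q * psi pf (1 - p) du * n110
                    + lam * ((1 + a1) * n000 + B * n110))"
proof -
  interpret C: switching_cost p q ps du \<beta> lam
    by unfold_locales (use \<open>0 < p\<close> \<open>p < 1\<close> \<open>0 < q\<close> \<open>q < 1\<close> \<open>0 < ps\<close> \<open>ps \<le> 1\<close> \<open>1 \<le> du\<close> in auto)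
  note defs = \<open>pf \<equiv> 1 - ps\<close> \<open>a1 \<equiv> _\<close> \<open>A \<equiv> _\<close> \<open>B \<equiv> _\<close> \<open>b1 \<equiv> _\<close> \<open>D \<equiv> _\<close> \<open>n000 \<equiv> _\<close> \<open>n110 \<equiv> _\<close>
  have "nu = C.nu_from C.n000 C.n110"
    unfolding \<open>nu \<equiv> _\<close> C.nu_from_def C.n000_def C.n110_def C.D_def C.b1_def C.B_def C.A_def C.a1_def defs ..
  moreover have "\<beta> * p * pf * n000 / (1 - (1 - q) * pf)^2 + (1 - \<beta>) * q * psi pf (1 - p) du * n110
      + lam * ((1 + a1) * n000 + B * n110) = C.gain"
    unfolding C.gain_def C.n000_def C.n110_def C.D_def C.b1_def C.B_def C.A_def C.a1_def defs ..
  ultimately show ?thesis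
    using C.stationary_iff C.avg_cost_eq_gain by simp
qed

end
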